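(* Let $(M,\circ,\mathrm{OR})$ be a free $\mathbb{D}$-module of rank 3 with scalar product and orientation, and let $z_1,z_2,z_3\in M\setminus\epsilon M$. Then $z_1\times z_2\circ z_3=0$ if and only if either the three axes are parallel, or the three axes intersect orthogonally a common line of $E$.
   Context: $\mathbb{D}=\{a+\epsilon b: a,b\in\mathbb{R}\}$, $\epsilon^2=0$. Scalar product: symmetric $\mathbb{D}$-bilinear $\circ:M\times M\to\mathbb{D}$ with $\mathfrak{Re}(x\circ x)\ge0$, equality iff $x\in\epsilon M$; orientation: one of the two classes of ordered bases under $\{b'_j=A_{jk}b_k\}\sim\{b_k\}$ iff $\det\mathfrak{Re}(A)>0$. Cross product $x\times y=x^iy^j\epsilon_{ijk}m_k$ in any positive orthonormal basis $\{m_i\}$; $z_1\times z_2\circ z_3$ means $(z_1\times z_2)\circ z_3$. $V=M/\epsilon M$, $\pi$ the quotient map. $E$ is the set of real 3-dimensional subspaces $P\subset M$ with $\mathfrak{Du}(x\circ y)=0$ for $x,y\in P$ and $P\cap\epsilon M=\{0\}$, a Euclidean affine space over $V$ (with $B-A:=d^ke_k$ where $e^B_i=e^A_i+\epsilon\,\epsilon_{ijk}d^ke^A_j$, $\{e_i\}$ positive orthonormal in $V$, $e^P_i\in P$ its lift). Each $z\in M\setminus\epsilon M$ is uniquely $z=(a+\epsilon b)u$ with $a>0$, $b\in\mathbb{R}$, $u\circ u=1$; its axis is the line $\{P\in E: u\in P\}$, with direction $\pi(u)$. *)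

theory Defs
  imports "HOL-Analysis.Analysis"
begin

datatype dual = Dual (dRe: real) (dDu: real)

instantiation dual :: comm_ring_1
begin
definition "0 = Dual 0 0"
definition "1 = Dual 1 0"
definition "a + b = Dual (dRe a + dRe b) (dDu a + dDu b)"
definition "a - b = Dual (dRe a - dRe b) (dDu a - dDu b)"
definition "- a = Dual (- dRe a) (- dDu a)"
definition "a * b = Dual (dRe a * dRe b) (dRe a * dDu b + dDu a * dRe b)"
instance
  by standard (auto simp: zero_dual_def one_dual_def plus_dual_def minus_dual_def
      uminus_dual_def times_dual_def dual.expand algebra_simps)
end

definition eps :: dual where "eps = Dual 0 1"

section \<open>The module M = D^3 (every free D-module of rank 3 is isomorphic to it)\<close>

type_synonym dmod = "dual ^ 3"

definition epsM :: "dmod set" where "epsM = range (\<lambda>x. eps *s x)"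

definition rsc :: "real \<Rightarrow> dmod \<Rightarrow> dmod" where "rsc r x = Dual r 0 *s x"

definition scalar_product :: "(dmod \<Rightarrow> dmod \<Rightarrow> dual) \<Rightarrow> bool" where
  "scalar_product sp \<longleftrightarrow>
     (\<forall>x y. sp x y = sp y x) \<and>
     (\<forall>x y z. sp (x + y) z = sp x z + sp y z) \<and>
     (\<forall>c x y. sp (c *s x) y = c * sp x y) \<and>
     (\<forall>x. dRe (sp x x) \<ge> 0 \<and> (dRe (sp x x) = 0 \<longleftrightarrow> x \<in> epsM))"

definition is_basis :: "(3 \<Rightarrow> dmod) \<Rightarrow> bool" where
  "is_basis b \<longleftrightarrow> (\<forall>x. \<exists>!c::3 \<Rightarrow> dual. x = (\<Sum>i\<in>UNIV. c i *s b i))"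

definition same_orient :: "(3 \<Rightarrow> dmod) \<Rightarrow> (3 \<Rightarrow> dmod) \<Rightarrow> bool" where
  "same_orient b b' \<longleftrightarrow> (\<exists>A :: dual ^ 3 ^ 3.
      (\<forall>j. b' j = (\<Sum>k\<in>UNIV. (A $ j $ k) *s b k)) \<and>
      det (\<chi> i j. dRe (A $ i $ j)) > 0)"

definition orientation :: "(3 \<Rightarrow> dmod) set \<Rightarrow> bool" where
  "orientation OR \<longleftrightarrow> (\<exists>b0. is_basis b0 \<and> OR = {b. is_basis b \<and> same_orient b0 b})"

definition pos_orthonormal :: "(dmod \<Rightarrow> dmod \<Rightarrow> dual) \<Rightarrow> (3 \<Rightarrow> dmod) set \<Rightarrow> (3 \<Rightarrow> dmod) \<Rightarrow> bool" where
  "pos_orthonormal sp OR m \<longleftrightarrow> m \<in> OR \<and> (\<forall>i j. sp (m i) (m j) = (if i = j then 1 else 0))"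

definition levi :: "3 \<Rightarrow> 3 \<Rightarrow> 3 \<Rightarrow> real" where
  "levi i j k =
     (if (i, j, k) \<in> {(1, 2, 3), (2, 3, 1), (3, 1, 2)} then 1
      else if (i, j, k) \<in> {(1, 3, 2), (3, 2, 1), (2, 1, 3)} then -1 else 0)"

definition coords :: "(3 \<Rightarrow> dmod) \<Rightarrow> dmod \<Rightarrow> 3 \<Rightarrow> dual" where
  "coords m x = (THE c. x = (\<Sum>i\<in>UNIV. c i *s m i))"

definition cross :: "(dmod \<Rightarrow> dmod \<Rightarrow> dual) \<Rightarrow> (3 \<Rightarrow> dmod) set \<Rightarrow> dmod \<Rightarrow> dmod \<Rightarrow> dmod" where
  "cross sp OR x y =
     (let m = (SOME m. pos_orthonormal sp OR m)
      in (\<Sum>k\<in>UNIV. (\<Sum>i\<in>UNIV. \<Sum>j\<in>UNIV.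
             coords m x i * coords m y j * Dual (levi i j k) 0) *s m k))"

definition pi :: "dmod \<Rightarrow> dmod set" where "pi x = {y. x - y \<in> epsM}"

definition Eset :: "(dmod \<Rightarrow> dmod \<Rightarrow> dual) \<Rightarrow> dmod set set" where
  "Eset sp = {P. (\<exists>b :: 3 \<Rightarrow> dmod.
                    (\<forall>c. (\<Sum>i\<in>UNIV. rsc (c i) (b i)) = 0 \<longrightarrow> (\<forall>i. c i = 0)) \<and>
                    P = range (\<lambda>c. \<Sum>i\<in>UNIV. rsc (c i) (b i))) \<and>
                 (\<forall>x\<in>P. \<forall>y\<in>P. dDu (sp x y) = 0) \<and>
                 P \<inter> epsM = {0}}"

definition lift :: "dmod set \<Rightarrow> dmod \<Rightarrow> dmod" where
  "lift P v = (THE y. y \<in> P \<and> pi y = pi v)"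

text \<open>B - A \<in> V for A, B \<in> E: with e^A a positive orthonormal basis lying in A
  (the lift of a positive orthonormal basis of V), e^B_i = e^A_i + eps eps_ijk d^k e^A_j,
  and B - A = d^k e_k\<close>
definition diffE :: "(dmod \<Rightarrow> dmod \<Rightarrow> dual) \<Rightarrow> (3 \<Rightarrow> dmod) set \<Rightarrow> dmod set \<Rightarrow> dmod set \<Rightarrow> dmod set" where
  "diffE sp OR B A =
     (let eA = (SOME e. pos_orthonormal sp OR e \<and> (\<forall>i. e i \<in> A));
          d = (THE d :: 3 \<Rightarrow> real. \<forall>i. lift B (eA i) =
                 eA i + eps *s (\<Sum>j\<in>UNIV. \<Sum>k\<in>UNIV. rsc (levi i j k * d k) (eA j)))
      in pi (\<Sum>k\<in>UNIV. rsc (d k) (eA k)))"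

definition lineE :: "(dmod \<Rightarrow> dmod \<Rightarrow> dual) \<Rightarrow> (3 \<Rightarrow> dmod) set \<Rightarrow> dmod set \<Rightarrow> dmod \<Rightarrow> dmod set set" where
  "lineE sp OR A w = {B \<in> Eset sp. \<exists>t::real. diffE sp OR B A = pi (rsc t w)}"

definition unitpart :: "(dmod \<Rightarrow> dmod \<Rightarrow> dual) \<Rightarrow> dmod \<Rightarrow> dmod" where
  "unitpart sp z = (THE u. \<exists>a b. a > 0 \<and> z = Dual a b *s u \<and> sp u u = 1)"

definition axis :: "(dmod \<Rightarrow> dmod \<Rightarrow> dual) \<Rightarrow> dmod \<Rightarrow> dmod set set" where
  "axis sp z = {P \<in> Eset sp. unitpart sp z \<in> P}"

text \<open>direction of the axis of z is pi (unitpart z); directions pi x, pi y in V are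
  parallel iff one is a real multiple of the other; the inner product on V is
  pi x . pi y = Re (x o y)\<close>
definition vparallel :: "dmod \<Rightarrow> dmod \<Rightarrow> bool" where
  "vparallel x y \<longleftrightarrow> (\<exists>r::real. pi x = pi (rsc r y))"

end

theory Submission
  imports Defs
begin

(* Fix a positive orthonormal basis of M. Its coordinates identify M with pairs of vectors of R^3,
   x = a + eps b, and the scalar product becomes (a + eps b) o (a' + eps b') = a.a' + eps (a.b' + b.a').
   The elements of E are exactly the subspaces {a + eps (d x a)}, d in R^3, with d (up to a global
   sign) the position of the point.  The unit part a + eps b of z satisfies |a| = 1 and a.b = 0, and
   the axis of z is the line {q. q x a = b}, i.e. (a, b) are its Pluecker coordinates.

   Up to a unit factor, z1 x z2 o z3 is the triple product of the unit parts, whose real part is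
   det(a1, a2, a3) and whose dual part is the derivative of this determinant in the direction
   (b1, b2, b3).  If the directions are not all parallel, say w = a1 x a2 is nonzero, the real part
   vanishes iff all a_i are orthogonal to w, and then the dual part vanishes iff the projections of
   the three axes to a plane orthogonal to w pass through one point p, i.e. iff the line p + R w
   meets the three axes at right angles. *)

unbundle cross3_syntax

section \<open>Euclidean three-space\<close>

(* Defs reuses the name axis (the axis of z), hiding the library's unit vectors. *)
abbreviation std_basis :: "3 \<Rightarrow> 'a::zero_neq_one^3" where
  "std_basis i \<equiv> Finite_Cartesian_Product.axis i 1"

lemma std_basis_nth: "std_basis j $ i = (if i = j then 1 else 0)"
  by (simp add: Finite_Cartesian_Product.axis_def)

lemma sum_scaleR_std_basis: "(\<Sum>i\<in>UNIV. c i *\<^sub>R std_basis i) = ((\<chi> i. c i) :: real^3)"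
  by (simp add: vec_eq_iff sum_component std_basis_nth if_distrib[of "\<lambda>x. _ * x"] cong: if_cong)

lemma sum_scaleR_cross_std_basis:
  "(\<Sum>i\<in>UNIV. c i *\<^sub>R (d \<times> std_basis i)) = d \<times> ((\<chi> i. c i) :: real^3)"
  by (simp add: cross3_simps std_basis_nth)

lemma std_basis_inner_cross: "(\<chi> i. v \<bullet> (d \<times> std_basis i)) = - (d \<times> (v::real^3))"
  by (simp add: cross3_simps std_basis_nth forall_3)

lemma inner_cross_skew: "x \<bullet> (d \<times> y) + (d \<times> x) \<bullet> (y::real^3) = 0"
  by (simp add: cross3_simps)

lemma skew_linear_eq_cross:
  fixes g :: "real^3 \<Rightarrow> real^3"
  assumes "linear g" and skew: "\<And>x y. x \<bullet> g y + g x \<bullet> y = 0"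
  shows "\<exists>d. \<forall>v. g v = d \<times> v"
proof -
  define A where "A = matrix g"
  have gA: "g v = A *v v" for v using matrix_vector_mul(2)[OF assms(1)] by (metis A_def)
  have A: "A $ i $ j + A $ j $ i = 0" for i j
    using skew[of "std_basis i" "std_basis j"]
    by (simp add: gA matrix_vector_mult_basis inner_axis inner_axis' column_def add.commute)
  have "A *v v = vector [A$3$2, A$1$3, A$2$1] \<times> v" for v
    using A[of 1 1] A[of 2 2] A[of 3 3] A[of 1 2] A[of 1 3] A[of 2 3]
    by (simp add: cross3_def matrix_vector_mult_def sum_3 vec_eq_iff forall_3 vector_def add_eq_0_iff)
  then show ?thesis by (auto simp: gA)
qed

lemma levi_simps [simp]:
  "levi 1 2 3 = 1" "levi 2 3 1 = 1" "levi 3 1 2 = 1"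
  "levi 1 3 2 = -1" "levi 3 2 1 = -1" "levi 2 1 3 = -1"
  "levi i i k = 0" "levi i k i = 0" "levi k i i = 0"
  by (auto simp: levi_def)

lemma levi_sum_eq_cross:
  "(\<Sum>k\<in>UNIV. levi i j k * d k) = ((\<chi> k. d k) \<times> std_basis i) $ j"
  using exhaust_3[of i] exhaust_3[of j] by (auto simp: sum_3 cross3_def std_basis_nth levi_def)

definition frame_matrix :: "(3 \<Rightarrow> real^3) \<Rightarrow> real^3^3" where
  "frame_matrix x = (\<chi> r c. x c $ r)"

lemma frame_matrix_mult: "frame_matrix x *v v = (\<Sum>c\<in>UNIV. (v $ c) *\<^sub>R x c)"
  by (simp add: frame_matrix_def matrix_vector_mult_def vec_eq_iff sum_component mult.commute)

lemma orthogonal_frame_matrix: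
  assumes "\<And>i j. x i \<bullet> x j = (if i = j then 1 else 0)"
  shows "orthogonal_matrix (frame_matrix x)"
proof -
  have "column c (frame_matrix x) = x c" for c
    by (simp add: frame_matrix_def column_def vec_eq_iff)
  then show ?thesis
    using assms by (auto simp: orthogonal_matrix_orthonormal_columns norm_eq_1 orthogonal_def)
qed

lemma levi_sum_orthonormal_frame:
  fixes x :: "3 \<Rightarrow> real^3"
  assumes frame: "\<And>i j. x i \<bullet> x j = (if i = j then 1 else 0)"
  obtains \<sigma> :: real where "\<sigma> = 1 \<or> \<sigma> = -1" and
    "\<And>d i. (\<Sum>j\<in>UNIV. \<Sum>k\<in>UNIV. (levi i j k * d k) *\<^sub>R x j) = \<sigma> *\<^sub>R ((\<Sum>k\<in>UNIV. d k *\<^sub>R x k) \<times> x i)"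
proof -
  let ?Q = "frame_matrix x"
  have Q_axis: "?Q *v std_basis i = x i" for i
    by (simp add: frame_matrix_mult std_basis_nth if_distrib[of "\<lambda>a. a *\<^sub>R _"] cong: if_cong)
  have \<sigma>: "det ?Q = 1 \<or> det ?Q = -1"
    and cross: "\<And>u v. (?Q *v u) \<times> (?Q *v v) = det ?Q *\<^sub>R (?Q *v (u \<times> v))"
    using orthogonal_frame_matrix[OF frame] det_orthogonal_matrix cross_orthogonal_matrix by blast+
  have "(\<Sum>j\<in>UNIV. \<Sum>k\<in>UNIV. (levi i j k * d k) *\<^sub>R x j) = det ?Q *\<^sub>R ((\<Sum>k\<in>UNIV. d k *\<^sub>R x k) \<times> x i)"
    for d i
  proof -
    have "(\<Sum>j\<in>UNIV. \<Sum>k\<in>UNIV. (levi i j k * d k) *\<^sub>R x j) = ?Q *v ((\<chi> k. d k) \<times> std_basis i)"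
      by (simp add: frame_matrix_mult levi_sum_eq_cross[symmetric] scaleR_sum_left)
    also have "\<dots> = (det ?Q * det ?Q) *\<^sub>R (?Q *v ((\<chi> k. d k) \<times> std_basis i))"
      using \<sigma> by auto
    also have "\<dots> = det ?Q *\<^sub>R ((?Q *v (\<chi> k. d k)) \<times> (?Q *v std_basis i))"
      by (simp add: cross)
    also have "\<dots> = det ?Q *\<^sub>R ((\<Sum>k\<in>UNIV. d k *\<^sub>R x k) \<times> x i)"
      by (simp only: Q_axis) (simp add: frame_matrix_mult)
    finally show ?thesis .
  qed
  with \<sigma> show ?thesis using that by blast
qed

lemma orthonormal_frame_expansion:
  fixes x :: "3 \<Rightarrow> real^3"
  assumes frame: "\<And>i j. x i \<bullet> x j = (if i = j then 1 else 0)"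
  shows "(\<Sum>k\<in>UNIV. (v \<bullet> x k) *\<^sub>R x k) = v"
proof -
  let ?Q = "frame_matrix x"
  have "v = (?Q ** transpose ?Q) *v v"
    using orthogonal_frame_matrix[OF frame] by (simp add: orthogonal_matrix_def)
  also have "\<dots> = ?Q *v (transpose ?Q *v v)" by (simp only: matrix_vector_mul_assoc)
  also have "transpose ?Q *v v = (\<chi> k. v \<bullet> x k)"
    by (simp add: frame_matrix_def transpose_def matrix_vector_mult_def inner_vec_def vec_eq_iff
        mult.commute)
  finally show ?thesis unfolding frame_matrix_mult vec_lambda_beta by (rule sym)
qed

lemma cross_eq_0_imp_parallel: "(x::real^3) \<times> y = 0 \<Longrightarrow> y \<bullet> y = 1 \<Longrightarrow> x = (y \<bullet> x) *\<^sub>R y"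
  using Lagrange[of y x y] by simp

lemma cross_orthonormal_frame_eq_0:
  fixes x :: "3 \<Rightarrow> real^3"
  assumes frame: "\<And>i j. x i \<bullet> x j = (if i = j then 1 else 0)" and cross: "\<And>i. v \<times> x i = 0"
  shows "v = 0"
proof -
  have v: "v = (x i \<bullet> v) *\<^sub>R x i" for i
    using cross_eq_0_imp_parallel[OF cross] frame by simp
  have "x 1 \<bullet> v = x 1 \<bullet> ((x 2 \<bullet> v) *\<^sub>R x 2)"
    using v[of 2] by (rule arg_cong)
  then have "x 1 \<bullet> v = 0" using frame[of 1 2] by simp
  then show ?thesis using v[of 1] by simp
qed

section \<open>Lines in Pluecker coordinates\<close>

lemma cross_orthogonal_parallel:
  "(x::real^3) \<bullet> w = 0 \<Longrightarrow> y \<bullet> w = 0 \<Longrightarrow> (w \<bullet> w) *\<^sub>R (x \<times> y) = ((x \<times> y) \<bullet> w) *\<^sub>R w"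
  by (simp add: cross3_simps forall_3 del: vector_3; intro conjI; algebra)

lemma orthogonal_frame_decomposition:
  "(a::real^3) \<bullet> a = 1 \<Longrightarrow> w \<bullet> a = 0 \<Longrightarrow> b \<bullet> a = 0 \<Longrightarrow>
   (w \<bullet> w) *\<^sub>R b = (b \<bullet> w) *\<^sub>R w + (b \<bullet> (w \<times> a)) *\<^sub>R (w \<times> a)"
  by (simp add: cross3_simps forall_3 del: vector_3; intro conjI; algebra)

lemma triple_product_eq_0_if_orthogonal:
  assumes "(x::real^3) \<bullet> w = 0" "y \<bullet> w = 0" "z \<bullet> w = 0" "w \<noteq> 0"
  shows "x \<bullet> (y \<times> z) = 0"
proof -
  have "(x \<bullet> (y \<times> z)) *\<^sub>R w = (x \<bullet> w) *\<^sub>R (y \<times> z) + (y \<bullet> w) *\<^sub>R (z \<times> x) + (z \<bullet> w) *\<^sub>R (x \<times> y)"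
    by (simp add: cross3_simps forall_3)
  with assms show ?thesis by simp
qed

lemma triple_product_derivative_normal_form:
  fixes a1 a2 a3 b1 b2 b3 :: "real^3"
  assumes w: "w = a1 \<times> a2" and "a3 \<bullet> w = 0"
  shows "(w \<bullet> w) * (b1 \<bullet> (a2 \<times> a3) + a1 \<bullet> (b2 \<times> a3) + a1 \<bullet> (a2 \<times> b3)) =
    ((a2 \<times> a3) \<bullet> w) * (b1 \<bullet> w) + ((a3 \<times> a1) \<bullet> w) * (b2 \<bullet> w) + (w \<bullet> w) * (b3 \<bullet> w)"
proof -
  have aw: "a1 \<bullet> w = 0" "a2 \<bullet> w = 0" by (simp_all add: w dot_cross_self)
  have "(w \<bullet> w) * (b1 \<bullet> (a2 \<times> a3)) = ((a2 \<times> a3) \<bullet> w) * (b1 \<bullet> w)"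
    using arg_cong[OF cross_orthogonal_parallel[OF aw(2) assms(2)], of "\<lambda>v. b1 \<bullet> v"] by simp
  moreover have "a1 \<bullet> (b2 \<times> a3) = b2 \<bullet> (a3 \<times> a1)" by (simp add: cross3_simps)
  then have "(w \<bullet> w) * (a1 \<bullet> (b2 \<times> a3)) = ((a3 \<times> a1) \<bullet> w) * (b2 \<bullet> w)"
    using arg_cong[OF cross_orthogonal_parallel[OF assms(2) aw(1)], of "\<lambda>v. b2 \<bullet> v"] by simp
  moreover have "a1 \<bullet> (a2 \<times> b3) = b3 \<bullet> w" unfolding w by (simp add: cross3_simps)
  ultimately show ?thesis by (simp add: distrib_left)
qed

(* A line with direction a and moment b (Pluecker coordinates, a . b = 0) is {q. q \<times> a = b}. *)
definition meets_orthogonally :: "real^3 \<Rightarrow> real^3 \<Rightarrow> real^3 \<Rightarrow> real^3 \<Rightarrow> bool" where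
  "meets_orthogonally p w a b \<longleftrightarrow> a \<bullet> w = 0 \<and> (\<exists>t. (p + t *\<^sub>R w) \<times> a = b)"

lemma meets_orthogonallyI:
  fixes a b p w :: "real^3"
  assumes "a \<bullet> a = 1" "a \<bullet> w = 0" "a \<bullet> b = 0" "w \<noteq> 0" "p \<bullet> w = 0" "(p \<times> a) \<bullet> w = b \<bullet> w"
  shows "meets_orthogonally p w a b"
proof -
  define t where "t = b \<bullet> (w \<times> a) / (w \<bullet> w)"
  have N: "w \<bullet> w \<noteq> 0" using \<open>w \<noteq> 0\<close> by simp
  have "(w \<bullet> w) *\<^sub>R (p \<times> a) = (b \<bullet> w) *\<^sub>R w"
    using cross_orthogonal_parallel[of p w a] assms(2,5,6) by (simp add: inner_commute)
  then have "(w \<bullet> w) *\<^sub>R ((p + t *\<^sub>R w) \<times> a) = (b \<bullet> w) *\<^sub>R w + (b \<bullet> (w \<times> a)) *\<^sub>R (w \<times> a)"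
    using N by (simp add: t_def cross_add_left cross_mult_left scaleR_add_right)
  also have "\<dots> = (w \<bullet> w) *\<^sub>R b"
    using orthogonal_frame_decomposition[of a w b] assms(1-3) by (simp add: inner_commute)
  finally have "(p + t *\<^sub>R w) \<times> a = b" using N by simp
  then show ?thesis using assms(2) by (auto simp: meets_orthogonally_def)
qed

lemma common_perpendicular_exists:
  fixes a1 a2 a3 b1 b2 b3 :: "real^3"
  assumes unit: "a1 \<bullet> a1 = 1" "a2 \<bullet> a2 = 1" "a3 \<bullet> a3 = 1"
    and orth: "a1 \<bullet> b1 = 0" "a2 \<bullet> b2 = 0" "a3 \<bullet> b3 = 0"
    and "a1 \<times> a2 \<noteq> 0"
    and T0: "a1 \<bullet> (a2 \<times> a3) = 0"
    and T1: "b1 \<bullet> (a2 \<times> a3) + a1 \<bullet> (b2 \<times> a3) + a1 \<bullet> (a2 \<times> b3) = 0"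
  shows "\<exists>p. meets_orthogonally p (a1 \<times> a2) a1 b1 \<and> meets_orthogonally p (a1 \<times> a2) a2 b2 \<and>
    meets_orthogonally p (a1 \<times> a2) a3 b3"
proof -
  define w where "w = a1 \<times> a2"
  define N where "N = w \<bullet> w"
  have "w \<noteq> 0" using assms(7) by (simp add: w_def)
  then have N: "N \<noteq> 0" by (simp add: N_def)
  have aw: "a1 \<bullet> w = 0" "a2 \<bullet> w = 0" "a3 \<bullet> w = 0"
    using T0 by (simp_all add: w_def dot_cross_self) (simp add: cross3_simps)
  \<comment> \<open>\<open>p\<close> is the common point of the projections of the first two axes to \<open>w\<^sup>\<bottom>\<close>\<close>
  define p where "p = (1 / N) *\<^sub>R ((b2 \<bullet> w) *\<^sub>R a1 - (b1 \<bullet> w) *\<^sub>R a2)"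
  have pw: "p \<bullet> w = 0" by (simp add: p_def inner_diff_left aw)
  have k1: "(p \<times> a1) \<bullet> w = b1 \<bullet> w"
  proof -
    have "p \<times> a1 = (1 / N) *\<^sub>R ((b1 \<bullet> w) *\<^sub>R w)"
      by (simp add: p_def w_def cross_mult_left Cross3.left_diff_distrib cross_skew[of a2 a1])
    then show ?thesis using N by (simp add: N_def)
  qed
  have k2: "(p \<times> a2) \<bullet> w = b2 \<bullet> w"
  proof -
    have "p \<times> a2 = (1 / N) *\<^sub>R ((b2 \<bullet> w) *\<^sub>R w)"
      by (simp add: p_def w_def cross_mult_left Cross3.left_diff_distrib)
    then show ?thesis using N by (simp add: N_def)
  qed
  have k3: "(p \<times> a3) \<bullet> w = b3 \<bullet> w"
  proof -
    have "((a2 \<times> a3) \<bullet> w) * (b1 \<bullet> w) + ((a3 \<times> a1) \<bullet> w) * (b2 \<bullet> w) + N * (b3 \<bullet> w) = 0"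
      using triple_product_derivative_normal_form[OF w_def aw(3), of b1 b2 b3] T1 by (simp add: N_def)
    moreover have "N * ((p \<times> a3) \<bullet> w) = (b2 \<bullet> w) * ((a1 \<times> a3) \<bullet> w) - (b1 \<bullet> w) * ((a2 \<times> a3) \<bullet> w)"
      using N by (simp add: p_def cross_mult_left Cross3.left_diff_distrib inner_diff_left)
    ultimately have "N * ((p \<times> a3) \<bullet> w) = N * (b3 \<bullet> w)"
      using cross_skew[of a1 a3] by (simp del: mult_cancel_left) argo
    then show ?thesis using N by simp
  qed
  show ?thesis
    using meets_orthogonallyI[OF unit(1) aw(1) orth(1) \<open>w \<noteq> 0\<close> pw k1]
      meets_orthogonallyI[OF unit(2) aw(2) orth(2) \<open>w \<noteq> 0\<close> pw k2]
      meets_orthogonallyI[OF unit(3) aw(3) orth(3) \<open>w \<noteq> 0\<close> pw k3]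
    by (auto simp: w_def)
qed

lemma triple_product_derivative_eq_0_if_meets:
  fixes a1 a2 a3 b1 b2 b3 :: "real^3"
  assumes "w \<noteq> 0" and "meets_orthogonally p w a1 b1" "meets_orthogonally p w a2 b2"
    "meets_orthogonally p w a3 b3"
  shows "a1 \<bullet> (a2 \<times> a3) = 0" and "b1 \<bullet> (a2 \<times> a3) + a1 \<bullet> (b2 \<times> a3) + a1 \<bullet> (a2 \<times> b3) = 0"
proof -
  obtain t1 t2 t3 where aw: "a1 \<bullet> w = 0" "a2 \<bullet> w = 0" "a3 \<bullet> w = 0"
    and b: "b1 = p \<times> a1 + t1 *\<^sub>R (w \<times> a1)" "b2 = p \<times> a2 + t2 *\<^sub>R (w \<times> a2)"
      "b3 = p \<times> a3 + t3 *\<^sub>R (w \<times> a3)"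
    using assms(2-4) by (auto simp: meets_orthogonally_def cross_add_left cross_mult_left)
  have wx: "(w \<times> a) \<bullet> w = 0" for a by (simp add: dot_cross_self)
  show "a1 \<bullet> (a2 \<times> a3) = 0" using triple_product_eq_0_if_orthogonal[OF aw \<open>w \<noteq> 0\<close>] .
  \<comment> \<open>the infinitesimal rotation \<open>x \<mapsto> p \<times> x\<close> preserves the triple product\<close>
  have rotation: "(p \<times> a1) \<bullet> (a2 \<times> a3) + a1 \<bullet> ((p \<times> a2) \<times> a3) + a1 \<bullet> (a2 \<times> (p \<times> a3)) = 0"
    by (simp add: cross3_simps)
  have "b1 \<bullet> (a2 \<times> a3) + a1 \<bullet> (b2 \<times> a3) + a1 \<bullet> (a2 \<times> b3) =
      t1 * ((w \<times> a1) \<bullet> (a2 \<times> a3)) + t2 * (a1 \<bullet> ((w \<times> a2) \<times> a3)) + t3 * (a1 \<bullet> (a2 \<times> (w \<times> a3)))"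
    using rotation unfolding b
    by (simp add: cross_add_left cross_add_right cross_mult_left cross_mult_right
        inner_add_left inner_add_right algebra_simps)
  also have "\<dots> = 0"
    using triple_product_eq_0_if_orthogonal[OF wx aw(2,3) \<open>w \<noteq> 0\<close>]
      triple_product_eq_0_if_orthogonal[OF aw(1) wx aw(3) \<open>w \<noteq> 0\<close>]
      triple_product_eq_0_if_orthogonal[OF aw(1,2) wx \<open>w \<noteq> 0\<close>]
    by simp
  finally show "b1 \<bullet> (a2 \<times> a3) + a1 \<bullet> (b2 \<times> a3) + a1 \<bullet> (a2 \<times> b3) = 0" .
qed

lemma plucker_triple_product_eq_0_iff:
  fixes a1 a2 a3 b1 b2 b3 :: "real^3"
  assumes unit: "a1 \<bullet> a1 = 1" "a2 \<bullet> a2 = 1" "a3 \<bullet> a3 = 1"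
    and orth: "a1 \<bullet> b1 = 0" "a2 \<bullet> b2 = 0" "a3 \<bullet> b3 = 0"
  shows "(a1 \<bullet> (a2 \<times> a3) = 0 \<and> b1 \<bullet> (a2 \<times> a3) + a1 \<bullet> (b2 \<times> a3) + a1 \<bullet> (a2 \<times> b3) = 0) \<longleftrightarrow>
    ((\<forall>x\<in>{a1, a2, a3}. \<forall>y\<in>{a1, a2, a3}. \<exists>r. x = r *\<^sub>R y) \<or>
     (\<exists>p w. w \<noteq> 0 \<and> meets_orthogonally p w a1 b1 \<and> meets_orthogonally p w a2 b2 \<and>
        meets_orthogonally p w a3 b3))"
    (is "?T0 \<and> ?T1 \<longleftrightarrow> ?parallel \<or> ?perpendicular")
proof
  assume T: "?T0 \<and> ?T1"
  consider "a1 \<times> a2 \<noteq> 0" | "a1 \<times> a3 \<noteq> 0" | "a2 \<times> a3 \<noteq> 0"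
    | "a1 \<times> a2 = 0" "a1 \<times> a3 = 0" "a2 \<times> a3 = 0" by blast
  then show "?parallel \<or> ?perpendicular"
  proof cases
    case 1
    then show ?thesis using common_perpendicular_exists[OF unit orth 1] 1 T by blast
  next
    case 2
    have "a1 \<bullet> (a3 \<times> a2) = 0" "b1 \<bullet> (a3 \<times> a2) + a1 \<bullet> (b3 \<times> a2) + a1 \<bullet> (a3 \<times> b2) = 0"
      using T by (simp_all add: cross3_simps)
    then show ?thesis using common_perpendicular_exists[OF unit(1,3,2) orth(1,3,2) 2] 2 by blast
  next
    case 3
    have "a2 \<bullet> (a3 \<times> a1) = 0" "b2 \<bullet> (a3 \<times> a1) + a2 \<bullet> (b3 \<times> a1) + a2 \<bullet> (a3 \<times> b1) = 0"
      using T by (simp_all add: cross3_simps)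
    then show ?thesis using common_perpendicular_exists[OF unit(2,3,1) orth(2,3,1) 3] 3 by blast
  next
    case 4
    then have "x \<times> y = 0" if "x \<in> {a1, a2, a3}" "y \<in> {a1, a2, a3}" for x y
      using that by (auto simp: cross_skew[of a2 a1] cross_skew[of a3 a1] cross_skew[of a3 a2])
    then have ?parallel using unit cross_eq_0_imp_parallel by blast
    then show ?thesis ..
  qed
next
  assume "?parallel \<or> ?perpendicular"
  then show "?T0 \<and> ?T1"
  proof
    assume ?parallel
    then obtain r s where "a2 = r *\<^sub>R a1" "a3 = s *\<^sub>R a1" by blast
    then show ?thesis by (simp add: cross_mult_left cross_mult_right dot_cross_self)
  next
    assume ?perpendicular
    then show ?thesis using triple_product_derivative_eq_0_if_meets by blast
  qed
qed

section \<open>Dual numbers\<close>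

lemma dual_eq_iff: "x = y \<longleftrightarrow> dRe x = dRe y \<and> dDu x = dDu y"
  by (cases x; cases y) auto

lemma dual_components [simp]:
  "dRe (x + y) = dRe x + dRe y" "dDu (x + y) = dDu x + dDu y"
  "dRe (x - y) = dRe x - dRe y" "dDu (x - y) = dDu x - dDu y"
  "dRe (- x) = - dRe x" "dDu (- x) = - dDu x"
  "dRe (x * y) = dRe x * dRe y" "dDu (x * y) = dRe x * dDu y + dDu x * dRe y"
  "dRe 0 = 0" "dDu 0 = 0" "dRe 1 = 1" "dDu 1 = 0" "dRe eps = 0" "dDu eps = 1"
  by (simp_all add: plus_dual_def minus_dual_def uminus_dual_def times_dual_def
      zero_dual_def one_dual_def eps_def)

lemma dRe_sum [simp]: "dRe (sum f A) = (\<Sum>i\<in>A. dRe (f i))"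
  by (induction A rule: infinite_finite_induct) auto

lemma dDu_sum [simp]: "dDu (sum f A) = (\<Sum>i\<in>A. dDu (f i))"
  by (induction A rule: infinite_finite_induct) auto

definition dual_sqrt :: "dual \<Rightarrow> dual" where
  "dual_sqrt s = Dual (sqrt (dRe s)) (dDu s / (2 * sqrt (dRe s)))"

definition dual_inverse :: "dual \<Rightarrow> dual" where
  "dual_inverse s = Dual (1 / dRe s) (- dDu s / (dRe s)\<^sup>2)"

lemma dRe_dual_sqrt [simp]: "dRe (dual_sqrt s) = sqrt (dRe s)"
  by (simp add: dual_sqrt_def)

lemma dual_sqrt_square: "dRe s > 0 \<Longrightarrow> dual_sqrt s * dual_sqrt s = s"
  by (simp add: dual_sqrt_def dual_eq_iff field_simps)

lemma dual_sqrt_unique: "a > 0 \<Longrightarrow> dual_sqrt (Dual a b * Dual a b) = Dual a b"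
  by (simp add: dual_sqrt_def dual_eq_iff)

lemma dual_inverse_mult: "dRe s \<noteq> 0 \<Longrightarrow> dual_inverse s * s = 1"
  by (simp add: dual_inverse_def dual_eq_iff field_simps power2_eq_square)

lemma dual_mult_left_cancel: "dRe c \<noteq> 0 \<Longrightarrow> c * x = c * y \<longleftrightarrow> x = y"
  by (metis dual_inverse_mult mult.assoc mult_1)

lemma dual_scaleM_left_cancel: "dRe c \<noteq> 0 \<Longrightarrow> c *s x = c *s y \<longleftrightarrow> x = (y :: dual^'n)"
  by (auto simp: vec_eq_iff dual_mult_left_cancel)

lemma epsM_iff: "x \<in> epsM \<longleftrightarrow> (\<forall>i. dRe (x $ i) = 0)"
proof
  assume "\<forall>i. dRe (x $ i) = 0"
  then have "x = eps *s (\<chi> i. Dual (dDu (x $ i)) 0)"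
    by (auto simp: vec_eq_iff dual_eq_iff)
  then show "x \<in> epsM" unfolding epsM_def by blast
qed (auto simp: epsM_def)

section \<open>Bases and orientations of \<open>M\<close>\<close>

definition orthonormal :: "(dmod \<Rightarrow> dmod \<Rightarrow> dual) \<Rightarrow> (3 \<Rightarrow> dmod) \<Rightarrow> bool" where
  "orthonormal sp q \<longleftrightarrow> (\<forall>i j. sp (q i) (q j) = (if i = j then 1 else 0))"

definition dspan :: "(3 \<Rightarrow> dmod) \<Rightarrow> dmod set" where
  "dspan q = {x. \<exists>c. x = (\<Sum>i\<in>UNIV. c i *s q i)}"

lemma dspan_lincomb: "(\<Sum>i\<in>UNIV. c i *s q i) \<in> dspan q"
  by (auto simp: dspan_def)

lemma dspan_basis: "q j \<in> dspan q"
proof -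
  have "(\<Sum>i\<in>UNIV. (if i = j then 1 else 0) *s q i) = (\<Sum>i\<in>UNIV. if i = j then q i else 0)"
    by (rule sum.cong) auto
  then have "q j = (\<Sum>i\<in>UNIV. (if i = j then 1 else 0) *s q i)"
    by simp
  then show ?thesis by (metis dspan_lincomb)
qed

lemma dspan_add: "x \<in> dspan q \<Longrightarrow> y \<in> dspan q \<Longrightarrow> x + y \<in> dspan q"
proof -
  assume "x \<in> dspan q" "y \<in> dspan q"
  then obtain c d where "x = (\<Sum>i\<in>UNIV. c i *s q i)" "y = (\<Sum>i\<in>UNIV. d i *s q i)"
    unfolding dspan_def by blast
  then have "x + y = (\<Sum>i\<in>UNIV. (c i + d i) *s q i)"
    by (simp add: vector_sadd_rdistrib sum.distrib)
  then show ?thesis by (metis dspan_lincomb)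
qed

lemma dspan_scale: "x \<in> dspan q \<Longrightarrow> a *s x \<in> dspan q"
proof -
  assume "x \<in> dspan q"
  then obtain c where "x = (\<Sum>i\<in>UNIV. c i *s q i)" unfolding dspan_def by blast
  then have "a *s x = (\<Sum>i\<in>UNIV. (a * c i) *s q i)"
    by (simp add: vec_eq_iff sum_component sum_distrib_left mult.assoc)
  then show ?thesis by (metis dspan_lincomb)
qed

lemma dspan_UNIV_if_std_basis:
  assumes "\<And>j. std_basis j \<in> dspan q"
  shows "dspan q = UNIV"
proof -
  have "x \<in> dspan q" for x :: dmod
  proof -
    have "x = x $ 1 *s std_basis 1 + x $ 2 *s std_basis 2 + x $ 3 *s std_basis 3"
      by (simp add: vec_eq_iff std_basis_nth forall_3)
    then show ?thesis by (metis assms dspan_add dspan_scale)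
  qed
  then show ?thesis by blast
qed

lemma is_basis_iff_dspan:
  "is_basis b \<longleftrightarrow> dspan b = UNIV \<and>
     (\<forall>c d. (\<Sum>i\<in>UNIV. c i *s b i) = (\<Sum>i\<in>UNIV. d i *s b i) \<longrightarrow> c = d)"
proof
  assume b: "is_basis b"
  then have "dspan b = UNIV" unfolding is_basis_def dspan_def by blast
  moreover have "c = d" if "(\<Sum>i\<in>UNIV. c i *s b i) = (\<Sum>i\<in>UNIV. d i *s b i)" for c d
    using b that unfolding is_basis_def by blast
  ultimately show "dspan b = UNIV \<and>
     (\<forall>c d. (\<Sum>i\<in>UNIV. c i *s b i) = (\<Sum>i\<in>UNIV. d i *s b i) \<longrightarrow> c = d)" by blast
qed (auto simp: is_basis_def dspan_def set_eq_iff)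

lemma is_basis_coeffs_unique:
  "is_basis b \<Longrightarrow> (\<Sum>i\<in>UNIV. c i *s b i) = (\<Sum>i\<in>UNIV. d i *s b i) \<Longrightarrow> c = d"
  unfolding is_basis_iff_dspan by blast

lemma lincomb_lincomb:
  fixes b e :: "3 \<Rightarrow> dmod"
  assumes "\<And>k. b k = (\<Sum>l\<in>UNIV. B k l *s e l)"
  shows "(\<Sum>k\<in>UNIV. A k *s b k) = (\<Sum>l\<in>UNIV. (\<Sum>k\<in>UNIV. A k * B k l) *s e l)"
proof -
  have "(\<Sum>k\<in>UNIV. A k * b k $ n) = (\<Sum>l\<in>UNIV. (\<Sum>k\<in>UNIV. A k * B k l) * e l $ n)" for n
  proof -
    have "(\<Sum>k\<in>UNIV. A k * b k $ n) = (\<Sum>k\<in>UNIV. \<Sum>l\<in>UNIV. A k * B k l * e l $ n)"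
      by (simp add: assms sum_component sum_distrib_left mult.assoc)
    also have "\<dots> = (\<Sum>l\<in>UNIV. (\<Sum>k\<in>UNIV. A k * B k l) * e l $ n)"
      by (subst sum.swap) (simp add: sum_distrib_right)
    finally show ?thesis .
  qed
  then show ?thesis by (simp add: vec_eq_iff sum_component)
qed

lemma basis_transition_det_nonzero:
  assumes b: "is_basis b" and e: "is_basis e" and A: "\<And>j. e j = (\<Sum>k\<in>UNIV. A j k *s b k)"
  shows "det (\<chi> i j. dRe (A i j)) \<noteq> 0"
proof -
  have "\<forall>k. \<exists>c. b k = (\<Sum>l\<in>UNIV. c l *s e l)"
    using e unfolding is_basis_iff_dspan dspan_def by blast
  then obtain B where B: "\<And>k. b k = (\<Sum>l\<in>UNIV. B k l *s e l)" by metis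
  have AB: "(\<Sum>k\<in>UNIV. A j k * B k l) = (if l = j then 1 else 0)" for j l
  proof -
    have "(\<Sum>l\<in>UNIV. (\<Sum>k\<in>UNIV. A j k * B k l) *s e l) = (\<Sum>l\<in>UNIV. (if l = j then 1 else 0) *s e l)"
      using lincomb_lincomb[OF B, of "A j"] A[of j] by (simp add: if_distrib[of "\<lambda>c. c *s _"]
          cong: if_cong)
    then have "(\<lambda>l. \<Sum>k\<in>UNIV. A j k * B k l) = (\<lambda>l. if l = j then 1 else 0)"
      by (rule is_basis_coeffs_unique[OF e])
    then show ?thesis by metis
  qed
  have "(\<Sum>k\<in>UNIV. dRe (A j k) * dRe (B k l)) = dRe (if l = j then 1 else 0)" for j l
    by (simp flip: AB)
  then have "(\<chi> i j. dRe (A i j)) ** (\<chi> i j. dRe (B i j)) = mat 1"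
    by (simp add: matrix_matrix_mult_def mat_def vec_eq_iff if_distrib[of dRe] cong: if_cong)
  then have "det (\<chi> i j. dRe (A i j)) * det (\<chi> i j. dRe (B i j)) = 1"
    by (metis det_I det_mul)
  then show ?thesis by auto
qed

definition flip_last :: "(3 \<Rightarrow> dmod) \<Rightarrow> (3 \<Rightarrow> dmod)" where
  "flip_last e = e(3 := - e 3)"

lemma lincomb_flip_last:
  "(\<Sum>i\<in>UNIV. c i *s flip_last e i) = (\<Sum>i\<in>UNIV. (c(3 := - c 3)) i *s e i)"
  by (rule sum.cong) (auto simp: flip_last_def vec_eq_iff)

lemma is_basis_flip_last:
  assumes "is_basis e" shows "is_basis (flip_last e)"
  unfolding is_basis_iff_dspan
proof (intro conjI allI impI)
  have flip: "(\<Sum>i\<in>UNIV. c i *s e i) = (\<Sum>i\<in>UNIV. (c(3 := - c 3)) i *s flip_last e i)" for c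
    unfolding lincomb_flip_last by (rule sum.cong) auto
  have "x \<in> dspan (flip_last e)" for x
  proof -
    from assms obtain c where "x = (\<Sum>i\<in>UNIV. c i *s e i)" unfolding is_basis_def by blast
    then show "x \<in> dspan (flip_last e)" unfolding dspan_def flip by blast
  qed
  then show "dspan (flip_last e) = UNIV" by blast
next
  fix c d :: "3 \<Rightarrow> dual"
  assume "(\<Sum>i\<in>UNIV. c i *s flip_last e i) = (\<Sum>i\<in>UNIV. d i *s flip_last e i)"
  then have cd: "c(3 := - c 3) = d(3 := - d 3)"
    unfolding lincomb_flip_last by (rule is_basis_coeffs_unique[OF assms])
  show "c = d"
  proof
    fix i show "c i = d i" using fun_cong[OF cd, of i] by (cases "i = 3") auto
  qed
qed

lemma basis_or_flip_last_in_orientation: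
  assumes OR: "orientation OR" and e: "is_basis e"
  shows "e \<in> OR \<or> flip_last e \<in> OR"
proof -
  from OR obtain b where b: "is_basis b" and OR_eq: "OR = {e. is_basis e \<and> same_orient b e}"
    unfolding orientation_def by blast
  have "\<forall>j. \<exists>c. e j = (\<Sum>k\<in>UNIV. c k *s b k)"
    using b unfolding is_basis_iff_dspan dspan_def by blast
  then obtain A where A: "\<And>j. e j = (\<Sum>k\<in>UNIV. A j k *s b k)" by metis
  define A' :: "dual^3^3" where "A' = (\<chi> j k. if j = 3 then - A j k else A j k)"
  have flip: "flip_last e j = (\<Sum>k\<in>UNIV. A' $ j $ k *s b k)" for j
    by (simp add: flip_last_def A'_def A vector_smult_lneg sum_negf)
  have det_flip: "det (\<chi> i j. dRe (A' $ i $ j)) = - det (\<chi> i j. dRe (A i j))"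
    by (simp add: A'_def det_3)
  have "same_orient b e \<or> same_orient b (flip_last e)"
  proof (cases "det (\<chi> i j. dRe (A i j)) > 0")
    case True
    then have "same_orient b e"
      unfolding same_orient_def using A by (intro exI[of _ "\<chi> j k. A j k"]) simp
    then show ?thesis ..
  next
    case False
    then have "det (\<chi> i j. dRe (A' $ i $ j)) > 0"
      using basis_transition_det_nonzero[OF b e A] det_flip by linarith
    then have "same_orient b (flip_last e)"
      unfolding same_orient_def using flip by blast
    then show ?thesis ..
  qed
  then show ?thesis using e is_basis_flip_last OR_eq by blast
qed

section \<open>Scalar products\<close>

locale dual_scalar_product =
  fixes sp :: "dmod \<Rightarrow> dmod \<Rightarrow> dual"
  assumes scalar_product: "scalar_product sp"
begin

lemma sp_commute: "sp x y = sp y x"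
  using scalar_product unfolding scalar_product_def by blast

lemma sp_add_left: "sp (x + y) z = sp x z + sp y z"
  using scalar_product unfolding scalar_product_def by blast

lemma sp_scale_left: "sp (c *s x) y = c * sp x y"
  using scalar_product unfolding scalar_product_def by blast

lemma sp_scale_right: "sp y (c *s x) = c * sp y x"
  by (metis sp_scale_left sp_commute)

lemma sp_minus_left: "sp (- x) y = - sp x y"
  using sp_scale_left[of "-1" x y] by (simp add: vector_sneg_minus1[symmetric])

lemma sp_minus_right: "sp y (- x) = - sp y x"
  by (metis sp_minus_left sp_commute)

lemma sp_diff_left: "sp (x - y) z = sp x z - sp y z"
  using sp_add_left[of x "- y"] by (simp add: sp_minus_left)

lemma sp_diff_right: "sp z (x - y) = sp z x - sp z y"
  by (metis sp_diff_left sp_commute)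

lemma sp_zero_left [simp]: "sp 0 y = 0"
  using sp_scale_left[of 0 0 y] by simp

lemma sp_sum_left: "sp (sum f A) y = (\<Sum>i\<in>A. sp (f i) y)"
  by (induction A rule: infinite_finite_induct) (auto simp: sp_add_left)

lemma sp_rsc_left: "sp (rsc r x) y = Dual r 0 * sp x y"
  by (simp add: rsc_def sp_scale_left)

lemma sp_self_pos: "x \<notin> epsM \<Longrightarrow> dRe (sp x x) > 0"
  using scalar_product unfolding scalar_product_def by (metis less_eq_real_def)

lemma sp_self_eq_0_iff: "dRe (sp x x) = 0 \<longleftrightarrow> x \<in> epsM"
  using scalar_product unfolding scalar_product_def by blast

lemma sp_lincomb_orthonormal:
  "orthonormal sp q \<Longrightarrow> sp (\<Sum>i\<in>UNIV. c i *s q i) (q j) = c j"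
  by (simp add: sp_sum_left sp_scale_left orthonormal_def if_distrib[of "\<lambda>x. _ * x"]
      cong: if_cong)

lemma orthonormal_is_basis: "orthonormal sp q \<Longrightarrow> dspan q = UNIV \<Longrightarrow> is_basis q"
  unfolding is_basis_iff_dspan
proof (intro conjI allI impI ext)
  fix c d j assume "orthonormal sp q" "(\<Sum>i\<in>UNIV. c i *s q i) = (\<Sum>i\<in>UNIV. d i *s q i)"
  then show "c j = d j" using sp_lincomb_orthonormal by metis
qed

definition normalized :: "dmod \<Rightarrow> dmod" where
  "normalized x = dual_inverse (dual_sqrt (sp x x)) *s x"

lemma sp_normalized_self:
  assumes "x \<notin> epsM" shows "sp (normalized x) (normalized x) = 1"
proof -
  let ?r = "dual_sqrt (sp x x)"
  have pos: "dRe (sp x x) > 0" using sp_self_pos assms .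
  have "sp (normalized x) (normalized x) = dual_inverse ?r * dual_inverse ?r * (?r * ?r)"
    by (simp add: normalized_def sp_scale_left sp_scale_right dual_sqrt_square[OF pos] mult.assoc)
  also have "\<dots> = (dual_inverse ?r * ?r) * (dual_inverse ?r * ?r)"
    by (simp add: ac_simps)
  also have "\<dots> = 1"
    using pos by (simp add: dual_inverse_mult)
  finally show ?thesis .
qed

lemma scale_normalized:
  assumes "x \<notin> epsM" shows "dual_sqrt (sp x x) *s normalized x = x"
proof -
  have "dRe (sp x x) > 0" using sp_self_pos assms .
  then have "dual_sqrt (sp x x) * dual_inverse (dual_sqrt (sp x x)) = 1"
    using dual_inverse_mult by (simp add: mult.commute)
  then show ?thesis by (simp add: normalized_def vector_smult_assoc)
qed

lemma orthonormal_triple: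
  assumes "sp g1 g1 = 1" "sp g2 g2 = 1" "sp g3 g3 = 1" "sp g1 g2 = 0" "sp g1 g3 = 0" "sp g2 g3 = 0"
  shows "orthonormal sp (\<lambda>i::3. if i = 1 then g1 else if i = 2 then g2 else g3)"
  unfolding orthonormal_def
proof (intro allI)
  fix i j :: 3
  show "sp (if i = 1 then g1 else if i = 2 then g2 else g3) (if j = 1 then g1 else if j = 2 then g2 else g3) =
      (if i = j then 1 else 0)"
    using exhaust_3[of i] exhaust_3[of j] assms
    by (auto simp: sp_commute[of g2 g1] sp_commute[of g3 g1] sp_commute[of g3 g2])
qed

lemma exists_orthonormal_basis: "\<exists>m. orthonormal sp m \<and> is_basis m"
proof -
  let ?s = "\<lambda>j. std_basis j :: dmod"
  define g1 where "g1 = normalized (?s 1)"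
  define y2 where "y2 = ?s 2 - sp (?s 2) g1 *s g1"
  define g2 where "g2 = normalized y2"
  define y3 where "y3 = ?s 3 - sp (?s 3) g1 *s g1 - sp (?s 3) g2 *s g2"
  define g3 where "g3 = normalized y3"
  have n1: "?s 1 \<notin> epsM" by (auto simp: epsM_iff std_basis_nth)
  have "y2 $ 2 = 1" by (simp add: y2_def g1_def normalized_def std_basis_nth)
  then have n2: "y2 \<notin> epsM" by (auto simp: epsM_iff intro!: exI[of _ 2])
  have "y3 $ 3 = 1" by (simp add: y3_def g2_def y2_def g1_def normalized_def std_basis_nth)
  then have n3: "y3 \<notin> epsM" by (auto simp: epsM_iff intro!: exI[of _ 3])
  have u: "sp g1 g1 = 1" "sp g2 g2 = 1" "sp g3 g3 = 1"
    unfolding g1_def g2_def g3_def using n1 n2 n3 by (simp_all add: sp_normalized_self)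
  have o12: "sp g1 g2 = 0"
    unfolding g2_def normalized_def y2_def by (simp add: sp_scale_right sp_diff_right u sp_commute)
  have o13: "sp g1 g3 = 0"
    unfolding g3_def normalized_def y3_def by (simp add: sp_scale_right sp_diff_right u o12 sp_commute)
  have o23: "sp g2 g3 = 0"
    unfolding g3_def normalized_def y3_def
    by (simp add: sp_scale_right sp_diff_right u o12 sp_commute[of g2 g1] sp_commute[of g2 "?s 3"])
  define m where "m = (\<lambda>i::3. if i = 1 then g1 else if i = 2 then g2 else g3)"
  have m: "m 1 = g1" "m 2 = g2" "m 3 = g3" by (simp_all add: m_def)
  have orth: "orthonormal sp m"
    unfolding m_def by (rule orthonormal_triple) fact+
  have g: "g1 \<in> dspan m" "g2 \<in> dspan m" "g3 \<in> dspan m"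
    using dspan_basis[of m 1] dspan_basis[of m 2] dspan_basis[of m 3] by (simp_all only: m)
  have "y2 \<in> dspan m" "y3 \<in> dspan m"
    using scale_normalized[OF n2] scale_normalized[OF n3] g dspan_scale
    unfolding g2_def g3_def by metis+
  moreover have "?s 1 \<in> dspan m"
    using scale_normalized[OF n1] g dspan_scale unfolding g1_def by metis
  moreover have "?s 2 = y2 + sp (?s 2) g1 *s g1" "?s 3 = y3 + sp (?s 3) g1 *s g1 + sp (?s 3) g2 *s g2"
    by (simp_all add: y2_def y3_def)
  ultimately have "?s j \<in> dspan m" for j
    using exhaust_3[of j] g dspan_add dspan_scale by metis
  then show ?thesis using orth orthonormal_is_basis dspan_UNIV_if_std_basis by blast
qed

lemma orthonormal_flip_last: "orthonormal sp e \<Longrightarrow> orthonormal sp (flip_last e)"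
  unfolding orthonormal_def flip_last_def by (auto simp: sp_minus_left sp_minus_right)

lemma exists_pos_orthonormal:
  assumes "orientation OR" and "is_basis e" and "orthonormal sp e"
  shows "\<exists>m. pos_orthonormal sp OR m \<and> (m = e \<or> m = flip_last e)"
  using basis_or_flip_last_in_orientation[OF assms(1,2)] orthonormal_flip_last[OF assms(3)] assms(3)
  unfolding pos_orthonormal_def orthonormal_def by blast

lemma polar_decomposition_unique:
  assumes "z \<notin> epsM"
  shows "\<exists>!u. \<exists>a b. a > 0 \<and> z = Dual a b *s u \<and> sp u u = 1"
proof (rule ex1I)
  let ?r = "dual_sqrt (sp z z)"
  have "dRe ?r > 0" using sp_self_pos[OF assms] by simp
  then show "\<exists>a b. a > 0 \<and> z = Dual a b *s normalized z \<and> sp (normalized z) (normalized z) = 1"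
    using scale_normalized[OF assms] sp_normalized_self[OF assms] dual.collapse[of ?r] by metis
next
  fix u assume "\<exists>a b. a > 0 \<and> z = Dual a b *s u \<and> sp u u = 1"
  then obtain a b where ab: "a > 0" "z = Dual a b *s u" "sp u u = 1" by blast
  then have "dual_sqrt (sp z z) = Dual a b"
    using dual_sqrt_unique by (simp add: sp_scale_left sp_scale_right)
  then have "Dual a b *s u = Dual a b *s normalized z"
    using scale_normalized[OF assms] ab(2) by simp
  moreover have "dRe (Dual a b) \<noteq> 0" using ab(1) by simp
  ultimately show "u = normalized z" using dual_scaleM_left_cancel by blast
qed

lemma unitpartE:
  assumes "z \<notin> epsM"
  obtains a b where "a > 0" "z = Dual a b *s unitpart sp z" "sp (unitpart sp z) (unitpart sp z) = 1"
  using theI'[OF polar_decomposition_unique[OF assms]] unfolding unitpart_def[symmetric] by blast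

end

section \<open>Coordinates in an orthonormal frame\<close>

definition cross_in :: "(3 \<Rightarrow> dmod) \<Rightarrow> dmod \<Rightarrow> dmod \<Rightarrow> dmod" where
  "cross_in m x y = (\<Sum>k\<in>UNIV. (\<Sum>i\<in>UNIV. \<Sum>j\<in>UNIV.
     coords m x i * coords m y j * Dual (levi i j k) 0) *s m k)"

lemma cross_eq_cross_in: "cross sp OR = cross_in (SOME m. pos_orthonormal sp OR m)"
  by (simp add: fun_eq_iff cross_def cross_in_def Let_def)

locale orthonormal_coordinates = dual_scalar_product +
  fixes m :: "3 \<Rightarrow> dmod"
  assumes is_basis_m: "is_basis m" and orthonormal_m: "orthonormal sp m"
begin

definition re :: "dmod \<Rightarrow> real^3" where "re x = (\<chi> i. dRe (sp x (m i)))"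

definition du :: "dmod \<Rightarrow> real^3" where "du x = (\<chi> i. dDu (sp x (m i)))"

definition of_coords :: "real^3 \<Rightarrow> real^3 \<Rightarrow> dmod" where
  "of_coords a b = (\<Sum>i\<in>UNIV. Dual (a $ i) (b $ i) *s m i)"

lemma expansion: "x = (\<Sum>i\<in>UNIV. sp x (m i) *s m i)"
proof -
  obtain c where c: "x = (\<Sum>i\<in>UNIV. c i *s m i)"
    using is_basis_m unfolding is_basis_def by blast
  then show ?thesis using sp_lincomb_orthonormal[OF orthonormal_m] by simp
qed

lemma coords_eq: "coords m x = (\<lambda>i. sp x (m i))"
  unfolding coords_def
proof (rule the_equality)
  fix c assume "x = (\<Sum>i\<in>UNIV. c i *s m i)"
  then show "c = (\<lambda>i. sp x (m i))" using sp_lincomb_orthonormal[OF orthonormal_m] by auto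
qed (rule expansion)

lemma sp_expansion: "sp x y = (\<Sum>i\<in>UNIV. sp x (m i) * sp y (m i))"
proof -
  have "sp x y = sp (\<Sum>i\<in>UNIV. sp x (m i) *s m i) y" using expansion by metis
  then show ?thesis by (simp add: sp_sum_left sp_scale_left sp_commute[of "m _" y])
qed

lemma dRe_sp: "dRe (sp x y) = re x \<bullet> re y"
  by (subst sp_expansion) (simp add: inner_vec_def re_def)

lemma dDu_sp: "dDu (sp x y) = re x \<bullet> du y + du x \<bullet> re y"
  by (subst sp_expansion) (simp add: inner_vec_def re_def du_def sum.distrib)

lemma eq_iff_coords: "x = y \<longleftrightarrow> re x = re y \<and> du x = du y"
proof
  assume "re x = re y \<and> du x = du y"
  then have "sp x (m i) = sp y (m i)" for i by (auto simp: vec_eq_iff dual_eq_iff re_def du_def)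
  then show "x = y" using expansion[of x] expansion[of y] by simp
qed simp

lemma re_add [simp]: "re (x + y) = re x + re y"
  and du_add [simp]: "du (x + y) = du x + du y"
  and re_diff [simp]: "re (x - y) = re x - re y"
  and du_diff [simp]: "du (x - y) = du x - du y"
  and re_minus [simp]: "re (- x) = - re x"
  and du_minus [simp]: "du (- x) = - du x"
  and re_zero [simp]: "re 0 = 0"
  and du_zero [simp]: "du 0 = 0"
  and re_scale [simp]: "re (c *s x) = dRe c *\<^sub>R re x"
  and du_scale [simp]: "du (c *s x) = dRe c *\<^sub>R du x + dDu c *\<^sub>R re x"
  and re_rsc [simp]: "re (rsc r x) = r *\<^sub>R re x"
  and du_rsc [simp]: "du (rsc r x) = r *\<^sub>R du x"
  and re_sum [simp]: "re (sum f A) = (\<Sum>i\<in>A. re (f i))"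
  and du_sum [simp]: "du (sum f A) = (\<Sum>i\<in>A. du (f i))"
  by (simp_all add: re_def du_def vec_eq_iff sp_add_left sp_diff_left sp_minus_left sp_scale_left sp_rsc_left
      sp_sum_left sum_component)

lemma epsM_iff_re: "x \<in> epsM \<longleftrightarrow> re x = 0"
  using sp_self_eq_0_iff[of x] dRe_sp[of x x] by simp

lemma sp_of_coords: "sp (of_coords a b) (m j) = Dual (a $ j) (b $ j)"
  unfolding of_coords_def by (rule sp_lincomb_orthonormal[OF orthonormal_m])

lemma re_of_coords [simp]: "re (of_coords a b) = a"
  and du_of_coords [simp]: "du (of_coords a b) = b"
  by (simp_all add: vec_eq_iff sp_of_coords re_def du_def)

lemma pi_eq_iff: "pi x = pi y \<longleftrightarrow> re x = re y"
  by (auto simp: pi_def epsM_iff_re set_eq_iff)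

lemma sp_cross_in:
  "sp (cross_in m x y) z =
     (\<Sum>k\<in>UNIV. (\<Sum>i\<in>UNIV. \<Sum>j\<in>UNIV. sp x (m i) * sp y (m j) * Dual (levi i j k) 0) * sp z (m k))"
  by (simp add: cross_in_def coords_eq sp_sum_left sp_scale_left sp_commute[of "m _" z])

lemma dRe_triple_product: "dRe (sp (cross_in m x y) z) = re x \<bullet> (re y \<times> re z)"
  by (simp add: sp_cross_in sum_3 cross3_simps re_def)

lemma dDu_triple_product:
  "dDu (sp (cross_in m x y) z) = du x \<bullet> (re y \<times> re z) + re x \<bullet> (du y \<times> re z) + re x \<bullet> (re y \<times> du z)"
  by (simp add: sp_cross_in sum_3 cross3_simps re_def du_def)

lemma triple_product_scale:
  "sp (cross_in m (a *s x) (b *s y)) (c *s z) = a * b * c * sp (cross_in m x y) z"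
  by (simp add: sp_cross_in sp_scale_left sum_3 algebra_simps)

end

lemma (in dual_scalar_product) orthonormal_coordinates_chosen:
  assumes "orientation OR"
  shows "orthonormal_coordinates sp (SOME m. pos_orthonormal sp OR m)"
proof -
  obtain e where "orthonormal sp e" "is_basis e" using exists_orthonormal_basis by blast
  then have "\<exists>m. pos_orthonormal sp OR m" using exists_pos_orthonormal[OF assms] by blast
  then have "pos_orthonormal sp OR (SOME m. pos_orthonormal sp OR m)" by (rule someI_ex)
  then have "is_basis (SOME m. pos_orthonormal sp OR m)" "orthonormal sp (SOME m. pos_orthonormal sp OR m)"
    using assms unfolding pos_orthonormal_def orthonormal_def orientation_def by blast+
  then show ?thesis by unfold_locales
qed

section \<open>The Euclidean space \<open>E\<close> in coordinates\<close>

lemma EsetE: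
  assumes "P \<in> Eset sp"
  obtains b :: "3 \<Rightarrow> dmod"
  where "\<And>c. (\<Sum>i\<in>UNIV. rsc (c i) (b i)) = 0 \<Longrightarrow> \<forall>i. c i = 0"
    and "P = range (\<lambda>c. \<Sum>i\<in>UNIV. rsc (c i) (b i))"
    and "\<And>x y. x \<in> P \<Longrightarrow> y \<in> P \<Longrightarrow> dDu (sp x y) = 0"
    and "P \<inter> epsM = {0}"
proof -
  have E: "(\<exists>b :: 3 \<Rightarrow> dmod. (\<forall>c. (\<Sum>i\<in>UNIV. rsc (c i) (b i)) = 0 \<longrightarrow> (\<forall>i. c i = 0)) \<and>
      P = range (\<lambda>c. \<Sum>i\<in>UNIV. rsc (c i) (b i))) \<and>
      (\<forall>x\<in>P. \<forall>y\<in>P. dDu (sp x y) = 0) \<and> P \<inter> epsM = {0}"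
    using assms unfolding Eset_def mem_Collect_eq .
  then have "\<exists>b :: 3 \<Rightarrow> dmod. (\<forall>c. (\<Sum>i\<in>UNIV. rsc (c i) (b i)) = 0 \<longrightarrow> (\<forall>i. c i = 0)) \<and>
      P = range (\<lambda>c. \<Sum>i\<in>UNIV. rsc (c i) (b i))"
    by (rule conjunct1)
  then obtain b :: "3 \<Rightarrow> dmod" where
    "(\<forall>c. (\<Sum>i\<in>UNIV. rsc (c i) (b i)) = 0 \<longrightarrow> (\<forall>i. c i = 0)) \<and>
      P = range (\<lambda>c. \<Sum>i\<in>UNIV. rsc (c i) (b i))"
    ..
  then have "\<And>c. (\<Sum>i\<in>UNIV. rsc (c i) (b i)) = 0 \<Longrightarrow> \<forall>i. c i = 0"
    and "P = range (\<lambda>c. \<Sum>i\<in>UNIV. rsc (c i) (b i))"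
    by simp_all
  moreover from E have "\<And>x y. x \<in> P \<Longrightarrow> y \<in> P \<Longrightarrow> dDu (sp x y) = 0" and "P \<inter> epsM = {0}"
    by blast+
  ultimately show thesis by (rule that)
qed

context orthonormal_coordinates
begin

(* The point of E with position vector d; see diffE_Epoint for the sign. *)
definition Epoint :: "real^3 \<Rightarrow> dmod set" where
  "Epoint d = {y. du y = d \<times> re y}"

lemma mem_Epoint: "y \<in> Epoint d \<longleftrightarrow> du y = d \<times> re y"
  by (simp add: Epoint_def)

lemma Epoint_in_Eset: "Epoint d \<in> Eset sp"
proof -
  define b where "b i = of_coords (std_basis i) (d \<times> std_basis i)" for i
  define L where "L c = (\<Sum>i\<in>UNIV. rsc (c i) (b i))" for c
  have re_L: "re (L c) = (\<chi> i. c i)" for c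
    by (simp add: L_def b_def sum_scaleR_std_basis)
  have du_L: "du (L c) = d \<times> (\<chi> i. c i)" for c
    by (simp add: L_def b_def sum_scaleR_cross_std_basis)
  have "\<forall>c. L c = 0 \<longrightarrow> (\<forall>i. c i = 0)"
    using re_L by (metis re_zero vec_lambda_beta zero_index)
  moreover have "Epoint d = range L"
  proof (intro set_eqI iffI)
    fix y assume "y \<in> Epoint d"
    then have "y = L (\<lambda>i. re y $ i)" by (simp add: eq_iff_coords re_L du_L mem_Epoint)
    then show "y \<in> range L" by blast
  qed (auto simp: mem_Epoint re_L du_L)
  moreover have "\<forall>x\<in>Epoint d. \<forall>y\<in>Epoint d. dDu (sp x y) = 0"
    by (simp add: mem_Epoint dDu_sp cross3_simps)
  moreover have "Epoint d \<inter> epsM = {0}"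
    by (auto simp: mem_Epoint epsM_iff_re eq_iff_coords[of _ 0])
  ultimately show ?thesis unfolding Eset_def L_def by blast
qed

lemma Eset_graph:
  assumes "P \<in> Eset sp"
  obtains g where "linear g" and "\<And>x. x \<in> P \<Longrightarrow> du x = g (re x)" and "\<And>v. \<exists>x\<in>P. re x = v"
proof -
  obtain b :: "3 \<Rightarrow> dmod" where indep: "\<And>c. (\<Sum>i\<in>UNIV. rsc (c i) (b i)) = 0 \<Longrightarrow> \<forall>i. c i = 0"
    and P: "P = range (\<lambda>c. \<Sum>i\<in>UNIV. rsc (c i) (b i))"
    and "\<And>x y. x \<in> P \<Longrightarrow> y \<in> P \<Longrightarrow> dDu (sp x y) = 0" and transversal: "P \<inter> epsM = {0}"
    using EsetE[OF assms] by blast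
  define lc where "lc v = (\<Sum>i\<in>UNIV. rsc (v $ i) (b i))" for v :: "real^3"
  have lc_in_P: "lc v \<in> P" for v unfolding P lc_def by blast
  have P_lc: "\<exists>v. x = lc v" if "x \<in> P" for x
    using that unfolding P lc_def by (auto intro: exI[of _ "vec_lambda _"])
  define R where "R v = re (lc v)" for v
  define D where "D v = du (lc v)" for v
  have lin: "linear R" "linear D"
    by (auto intro!: linearI simp: R_def D_def lc_def scaleR_add_left sum.distrib scaleR_sum_right)
  have "inj R"
  proof (rule linear_injective_0[OF lin(1), THEN iffD2], intro allI impI)
    fix v assume "R v = 0"
    then have "lc v \<in> P \<inter> epsM" using lc_in_P by (simp add: R_def epsM_iff_re)
    then have "lc v = 0" using transversal by blast
    then have "\<forall>i. v $ i = 0" using indep[of "\<lambda>i. v $ i"] unfolding lc_def by blast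
    then show "v = 0" by (simp add: vec_eq_iff)
  qed
  then obtain R' where "linear R'" and R'R: "\<And>v. R' (R v) = v" and RR': "\<And>v. R (R' v) = v"
    using linear_injective_isomorphism[OF lin(1)] by auto
  show ?thesis
  proof
    show "linear (D \<circ> R')" using \<open>linear R'\<close> lin(2) by (rule linear_compose)
    show "du x = (D \<circ> R') (re x)" if "x \<in> P" for x
      using P_lc[OF that] R'R by (auto simp: D_def R_def)
    show "\<exists>x\<in>P. re x = v" for v
      using lc_in_P RR'[of v] by (auto simp: R_def)
  qed
qed

lemma Eset_imp_Epoint:
  assumes "P \<in> Eset sp"
  obtains d where "P = Epoint d"
proof -
  obtain g where "linear g" and du_P: "\<And>x. x \<in> P \<Longrightarrow> du x = g (re x)"
    and onto: "\<And>v. \<exists>x\<in>P. re x = v"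
    using Eset_graph[OF assms] by blast
  have "\<And>x y. x \<in> P \<Longrightarrow> y \<in> P \<Longrightarrow> dDu (sp x y) = 0"
    using EsetE[OF assms] by metis
  then have "re x \<bullet> g (re y) + g (re x) \<bullet> re y = 0" if "x \<in> P" "y \<in> P" for x y
    using that du_P by (metis dDu_sp)
  then have "v \<bullet> g v' + g v \<bullet> v' = 0" for v v'
    using onto by metis
  with \<open>linear g\<close> obtain d where d: "\<And>v. g v = d \<times> v"
    using skew_linear_eq_cross by blast
  have "P = Epoint d"
  proof (intro set_eqI iffI)
    fix z assume z: "z \<in> Epoint d"
    obtain x where "x \<in> P" "re x = re z" using onto by blast
    moreover have "du x = du z" using du_P[OF \<open>x \<in> P\<close>] z \<open>re x = re z\<close> by (simp add: d mem_Epoint)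
    ultimately show "z \<in> P" by (metis eq_iff_coords)
  qed (simp add: mem_Epoint du_P d)
  then show ?thesis by (rule that)
qed

lemma Eset_eq_range_Epoint: "Eset sp = range Epoint"
proof
  show "Eset sp \<subseteq> range Epoint" by (auto elim: Eset_imp_Epoint)
  show "range Epoint \<subseteq> Eset sp" using Epoint_in_Eset by auto
qed

lemma lift_Epoint: "lift (Epoint d) v = of_coords (re v) (d \<times> re v)"
  unfolding lift_def
proof (rule the_equality)
  fix y assume "y \<in> Epoint d \<and> pi y = pi v"
  then show "y = of_coords (re v) (d \<times> re v)" by (simp add: mem_Epoint pi_eq_iff eq_iff_coords)
qed (simp add: mem_Epoint pi_eq_iff)

lemma exists_pos_orthonormal_in_Epoint:
  assumes "orientation OR"
  shows "\<exists>e. pos_orthonormal sp OR e \<and> (\<forall>i. e i \<in> Epoint d)"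
proof -
  define e where "e i = of_coords (std_basis i) (d \<times> std_basis i)" for i
  have e_Epoint: "e i \<in> Epoint d" for i by (simp add: e_def mem_Epoint)
  have orth: "orthonormal sp e" unfolding orthonormal_def
  proof (intro allI)
    fix i j
    show "sp (e i) (e j) = (if i = j then 1 else 0)"
      by (simp add: dual_eq_iff dRe_sp dDu_sp e_def inner_axis_axis inner_cross_skew)
  qed
  have "x \<in> dspan e" for x
  proof -
    have "du (\<Sum>i\<in>UNIV. sp x (e i) *s e i) =
        d \<times> re x + ((\<chi> i. re x \<bullet> (d \<times> std_basis i)) + du x)"
      by (simp add: dRe_sp dDu_sp e_def sum.distrib scaleR_add_left sum_scaleR_std_basis
          sum_scaleR_cross_std_basis inner_axis)
    then have "x = (\<Sum>i\<in>UNIV. sp x (e i) *s e i)"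
      by (simp add: eq_iff_coords dRe_sp e_def sum_scaleR_std_basis inner_axis std_basis_inner_cross)
    then show ?thesis by (metis dspan_lincomb)
  qed
  then have "is_basis e" using orth orthonormal_is_basis by blast
  then obtain e' where e': "pos_orthonormal sp OR e'" "e' = e \<or> e' = flip_last e"
    using exists_pos_orthonormal[OF assms _ orth] by blast
  have "e' i \<in> Epoint d" for i
    using e'(2) e_Epoint by (auto simp: flip_last_def mem_Epoint)
  then show ?thesis using e'(1) by blast
qed

lemma orthonormal_re_frame: "orthonormal sp e \<Longrightarrow> re (e i) \<bullet> re (e j) = (if i = j then 1 else 0)"
  by (simp add: orthonormal_def flip: dRe_sp)

lemma lift_Epoint_frame_iff:
  assumes "orthonormal sp e" and e_Epoint: "\<And>i. e i \<in> Epoint dA"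
  obtains \<sigma> :: real where "\<sigma> = 1 \<or> \<sigma> = -1" and
    "\<And>d. (\<forall>i. lift (Epoint dB) (e i) = e i + eps *s (\<Sum>j\<in>UNIV. \<Sum>k\<in>UNIV. rsc (levi i j k * d k) (e j)))
      \<longleftrightarrow> d = (\<lambda>k. (\<sigma> *\<^sub>R (dB - dA)) \<bullet> re (e k))"
proof -
  define x where "x i = re (e i)" for i
  have frame: "x i \<bullet> x j = (if i = j then 1 else 0)" for i j
    using orthonormal_re_frame[OF assms(1)] by (simp add: x_def)
  have du_e: "du (e i) = dA \<times> x i" for i
    using e_Epoint by (simp add: x_def mem_Epoint)
  \<comment> \<open>\<open>\<sigma>\<close> is the orientation of the frame \<open>x\<close>; lines do not see it\<close>
  obtain \<sigma> :: real where \<sigma>: "\<sigma> = 1 \<or> \<sigma> = -1" and levi: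
    "\<And>d i. (\<Sum>j\<in>UNIV. \<Sum>k\<in>UNIV. (levi i j k * d k) *\<^sub>R x j) = \<sigma> *\<^sub>R ((\<Sum>k\<in>UNIV. d k *\<^sub>R x k) \<times> x i)"
    using levi_sum_orthonormal_frame[OF frame] by blast
  have "(\<forall>i. lift (Epoint dB) (e i) = e i + eps *s (\<Sum>j\<in>UNIV. \<Sum>k\<in>UNIV. rsc (levi i j k * d k) (e j)))
      \<longleftrightarrow> d = (\<lambda>k. (\<sigma> *\<^sub>R (dB - dA)) \<bullet> x k)" for d
  proof -
    let ?D = "\<Sum>k\<in>UNIV. d k *\<^sub>R x k"
    have "(\<forall>i. lift (Epoint dB) (e i) = e i + eps *s (\<Sum>j\<in>UNIV. \<Sum>k\<in>UNIV. rsc (levi i j k * d k) (e j)))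
        \<longleftrightarrow> (\<forall>i. dB \<times> x i = dA \<times> x i + \<sigma> *\<^sub>R (?D \<times> x i))"
      by (simp add: lift_Epoint eq_iff_coords du_e levi flip: x_def)
    also have "\<dots> \<longleftrightarrow> (\<forall>i. (dB - dA - \<sigma> *\<^sub>R ?D) \<times> x i = 0)"
      by (simp add: Cross3.left_diff_distrib cross_add_left cross_mult_left algebra_simps)
    also have "\<dots> \<longleftrightarrow> ?D = \<sigma> *\<^sub>R (dB - dA)"
      using cross_orthonormal_frame_eq_0[OF frame, of "dB - dA - \<sigma> *\<^sub>R ?D"] \<sigma>
      by (auto simp: algebra_simps)
    also have "\<dots> \<longleftrightarrow> d = (\<lambda>k. (\<sigma> *\<^sub>R (dB - dA)) \<bullet> x k)"
    proof
      assume D: "?D = \<sigma> *\<^sub>R (dB - dA)"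
      have "?D \<bullet> x k = d k" for k
        by (simp add: inner_sum_left frame if_distrib[of "\<lambda>a. _ * a"] cong: if_cong)
      then show "d = (\<lambda>k. (\<sigma> *\<^sub>R (dB - dA)) \<bullet> x k)" unfolding D[symmetric] by auto
    qed (use orthonormal_frame_expansion[OF frame, of "\<sigma> *\<^sub>R (dB - dA)"] in simp)
    finally show ?thesis .
  qed
  with \<sigma> show thesis using that by (simp add: x_def)
qed

lemma diffE_Epoint:
  assumes "orientation OR"
  obtains \<sigma> :: real where "\<sigma> = 1 \<or> \<sigma> = -1"
    and "diffE sp OR (Epoint dB) (Epoint dA) = pi (of_coords (\<sigma> *\<^sub>R (dB - dA)) 0)"
proof -
  define eA where "eA = (SOME e. pos_orthonormal sp OR e \<and> (\<forall>i. e i \<in> Epoint dA))"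
  have "pos_orthonormal sp OR eA \<and> (\<forall>i. eA i \<in> Epoint dA)"
    unfolding eA_def by (rule someI_ex[OF exists_pos_orthonormal_in_Epoint[OF assms]])
  then have eA: "orthonormal sp eA" "\<And>i. eA i \<in> Epoint dA"
    by (auto simp: pos_orthonormal_def orthonormal_def)
  obtain \<sigma> :: real where \<sigma>: "\<sigma> = 1 \<or> \<sigma> = -1" and shift:
    "\<And>d. (\<forall>i. lift (Epoint dB) (eA i) = eA i + eps *s (\<Sum>j\<in>UNIV. \<Sum>k\<in>UNIV. rsc (levi i j k * d k) (eA j)))
      \<longleftrightarrow> d = (\<lambda>k. (\<sigma> *\<^sub>R (dB - dA)) \<bullet> re (eA k))"
    using lift_Epoint_frame_iff[OF eA] by blast
  have "diffE sp OR (Epoint dB) (Epoint dA) =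
      pi (\<Sum>k\<in>UNIV. rsc ((\<sigma> *\<^sub>R (dB - dA)) \<bullet> re (eA k)) (eA k))"
    by (simp add: diffE_def Let_def shift flip: eA_def)
  also have "\<dots> = pi (of_coords (\<sigma> *\<^sub>R (dB - dA)) 0)"
    using orthonormal_frame_expansion[OF orthonormal_re_frame[OF eA(1)], of "\<sigma> *\<^sub>R (dB - dA)"]
    by (simp add: pi_eq_iff)
  finally show ?thesis using \<sigma> that by blast
qed

lemma Epoint_in_lineE_iff:
  assumes "orientation OR"
  shows "Epoint dB \<in> lineE sp OR (Epoint dA) w \<longleftrightarrow> (\<exists>t. dB - dA = t *\<^sub>R re w)"
proof -
  obtain \<sigma> :: real where \<sigma>: "\<sigma> = 1 \<or> \<sigma> = -1"
    and diff: "diffE sp OR (Epoint dB) (Epoint dA) = pi (of_coords (\<sigma> *\<^sub>R (dB - dA)) 0)"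
    using diffE_Epoint[OF assms] .
  have "Epoint dB \<in> lineE sp OR (Epoint dA) w \<longleftrightarrow> (\<exists>t. \<sigma> *\<^sub>R (dB - dA) = t *\<^sub>R re w)"
    by (simp add: lineE_def Epoint_in_Eset diff pi_eq_iff)
  also have "\<dots> \<longleftrightarrow> (\<exists>t. dB - dA = t *\<^sub>R re w)"
  proof -
    have "\<sigma> *\<^sub>R (dB - dA) = t *\<^sub>R re w \<longleftrightarrow> dB - dA = (\<sigma> * t) *\<^sub>R re w" for t
      using \<sigma> by (auto simp: algebra_simps)
    then show ?thesis using \<sigma> by (metis mult_minus_left mult_1 minus_minus)
  qed
  finally show ?thesis .
qed

definition axis_dir :: "dmod \<Rightarrow> real^3" where
  "axis_dir z = re (unitpart sp z)"

definition axis_moment :: "dmod \<Rightarrow> real^3" where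
  "axis_moment z = du (unitpart sp z)"

lemma axis_dir_unit: "z \<notin> epsM \<Longrightarrow> axis_dir z \<bullet> axis_dir z = 1"
  and axis_dir_moment_orthogonal: "z \<notin> epsM \<Longrightarrow> axis_dir z \<bullet> axis_moment z = 0"
proof -
  assume "z \<notin> epsM"
  then obtain a b where "sp (unitpart sp z) (unitpart sp z) = 1" by (rule unitpartE)
  then have "dRe (sp (unitpart sp z) (unitpart sp z)) = 1" "dDu (sp (unitpart sp z) (unitpart sp z)) = 0"
    by simp_all
  then show "axis_dir z \<bullet> axis_dir z = 1" "axis_dir z \<bullet> axis_moment z = 0"
    by (simp_all add: axis_dir_def axis_moment_def dRe_sp dDu_sp inner_commute)
qed

lemma axis_meets_lineE_orthogonally_iff:
  assumes "orientation OR"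
  shows "(axis sp z \<inter> lineE sp OR (Epoint p) w \<noteq> {} \<and> dRe (sp (unitpart sp z) w) = 0) \<longleftrightarrow>
    meets_orthogonally p (re w) (axis_dir z) (axis_moment z)"
proof -
  have "axis sp z \<inter> lineE sp OR (Epoint p) w \<noteq> {} \<longleftrightarrow>
      (\<exists>P\<in>Eset sp. unitpart sp z \<in> P \<and> P \<in> lineE sp OR (Epoint p) w)"
    unfolding axis_def by blast
  also have "\<dots> \<longleftrightarrow> (\<exists>q. unitpart sp z \<in> Epoint q \<and> Epoint q \<in> lineE sp OR (Epoint p) w)"
    unfolding Eset_eq_range_Epoint by blast
  also have "\<dots> \<longleftrightarrow> (\<exists>t. (p + t *\<^sub>R re w) \<times> axis_dir z = axis_moment z)"
    unfolding Epoint_in_lineE_iff[OF assms] mem_Epoint axis_dir_def axis_moment_def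
  proof (intro iffI; elim exE conjE)
    fix q t assume "du (unitpart sp z) = q \<times> re (unitpart sp z)" "q - p = t *\<^sub>R re w"
    then show "\<exists>t. (p + t *\<^sub>R re w) \<times> re (unitpart sp z) = du (unitpart sp z)"
      by (metis add.commute diff_add_cancel)
  next
    fix t assume "(p + t *\<^sub>R re w) \<times> re (unitpart sp z) = du (unitpart sp z)"
    then show "\<exists>q. du (unitpart sp z) = q \<times> re (unitpart sp z) \<and> (\<exists>t. q - p = t *\<^sub>R re w)"
      by (intro exI[of _ "p + t *\<^sub>R re w"]) auto
  qed
  finally show ?thesis
    by (auto simp: meets_orthogonally_def dRe_sp axis_dir_def inner_commute)
qed

lemma exists_lineE_meeting_axes_orthogonally_iff:
  assumes "orientation OR"
  shows "(\<exists>A w. A \<in> Eset sp \<and> w \<notin> epsM \<and>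
      (\<forall>z\<in>Z. axis sp z \<inter> lineE sp OR A w \<noteq> {} \<and> dRe (sp (unitpart sp z) w) = 0)) \<longleftrightarrow>
    (\<exists>p w. w \<noteq> 0 \<and> (\<forall>z\<in>Z. meets_orthogonally p w (axis_dir z) (axis_moment z)))"
proof
  assume "\<exists>A w. A \<in> Eset sp \<and> w \<notin> epsM \<and>
      (\<forall>z\<in>Z. axis sp z \<inter> lineE sp OR A w \<noteq> {} \<and> dRe (sp (unitpart sp z) w) = 0)"
  then obtain p w where "w \<notin> epsM"
    and "\<forall>z\<in>Z. axis sp z \<inter> lineE sp OR (Epoint p) w \<noteq> {} \<and> dRe (sp (unitpart sp z) w) = 0"
    unfolding Eset_eq_range_Epoint by blast
  then show "\<exists>p w. w \<noteq> 0 \<and> (\<forall>z\<in>Z. meets_orthogonally p w (axis_dir z) (axis_moment z))"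
    using axis_meets_lineE_orthogonally_iff[OF assms] by (auto simp: epsM_iff_re)
next
  assume "\<exists>p w. w \<noteq> 0 \<and> (\<forall>z\<in>Z. meets_orthogonally p w (axis_dir z) (axis_moment z))"
  then obtain p w where "w \<noteq> 0" "\<forall>z\<in>Z. meets_orthogonally p w (axis_dir z) (axis_moment z)"
    by blast
  then have "of_coords w 0 \<notin> epsM"
    and "\<forall>z\<in>Z. axis sp z \<inter> lineE sp OR (Epoint p) (of_coords w 0) \<noteq> {} \<and>
      dRe (sp (unitpart sp z) (of_coords w 0)) = 0"
    using axis_meets_lineE_orthogonally_iff[OF assms] by (simp_all add: epsM_iff_re)
  then show "\<exists>A w. A \<in> Eset sp \<and> w \<notin> epsM \<and>
      (\<forall>z\<in>Z. axis sp z \<inter> lineE sp OR A w \<noteq> {} \<and> dRe (sp (unitpart sp z) w) = 0)"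
    using Epoint_in_Eset by blast
qed

lemma triple_product_eq_0_iff_plucker:
  assumes "z1 \<notin> epsM" "z2 \<notin> epsM" "z3 \<notin> epsM"
  shows "sp (cross_in m z1 z2) z3 = 0 \<longleftrightarrow>
    axis_dir z1 \<bullet> (axis_dir z2 \<times> axis_dir z3) = 0 \<and>
    axis_moment z1 \<bullet> (axis_dir z2 \<times> axis_dir z3) + axis_dir z1 \<bullet> (axis_moment z2 \<times> axis_dir z3) +
      axis_dir z1 \<bullet> (axis_dir z2 \<times> axis_moment z3) = 0"
proof -
  obtain a1 b1 a2 b2 a3 b3 where "a1 > 0" "a2 > 0" "a3 > 0"
    and z: "z1 = Dual a1 b1 *s unitpart sp z1" "z2 = Dual a2 b2 *s unitpart sp z2"
      "z3 = Dual a3 b3 *s unitpart sp z3"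
    using unitpartE assms by metis
  then have "sp (cross_in m z1 z2) z3 =
      (Dual a1 b1 * Dual a2 b2 * Dual a3 b3) * sp (cross_in m (unitpart sp z1) (unitpart sp z2)) (unitpart sp z3)"
    by (metis triple_product_scale)
  moreover have "dRe (Dual a1 b1 * Dual a2 b2 * Dual a3 b3) \<noteq> 0"
    using \<open>a1 > 0\<close> \<open>a2 > 0\<close> \<open>a3 > 0\<close> by simp
  ultimately have "sp (cross_in m z1 z2) z3 = 0 \<longleftrightarrow>
      sp (cross_in m (unitpart sp z1) (unitpart sp z2)) (unitpart sp z3) = 0"
    using dual_mult_left_cancel[of _ _ 0] by simp
  then show ?thesis
    by (simp add: dual_eq_iff[of _ 0] dRe_triple_product dDu_triple_product axis_dir_def axis_moment_def)
qed

lemma vparallel_iff: "vparallel x y \<longleftrightarrow> (\<exists>r. re x = r *\<^sub>R re y)"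
  by (simp add: vparallel_def pi_eq_iff)

lemma triple_product_eq_0_iff_axes:
  assumes "orientation OR" and "z1 \<notin> epsM" "z2 \<notin> epsM" "z3 \<notin> epsM"
  shows "sp (cross_in m z1 z2) z3 = 0 \<longleftrightarrow>
     ((\<forall>z\<in>{z1, z2, z3}. \<forall>z'\<in>{z1, z2, z3}. vparallel (unitpart sp z) (unitpart sp z'))
      \<or> (\<exists>A w. A \<in> Eset sp \<and> w \<notin> epsM \<and>
           (\<forall>z\<in>{z1, z2, z3}. axis sp z \<inter> lineE sp OR A w \<noteq> {} \<and>
                              dRe (sp (unitpart sp z) w) = 0)))"
proof -
  have "sp (cross_in m z1 z2) z3 = 0 \<longleftrightarrow>
    axis_dir z1 \<bullet> (axis_dir z2 \<times> axis_dir z3) = 0 \<and>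
    axis_moment z1 \<bullet> (axis_dir z2 \<times> axis_dir z3) + axis_dir z1 \<bullet> (axis_moment z2 \<times> axis_dir z3) +
      axis_dir z1 \<bullet> (axis_dir z2 \<times> axis_moment z3) = 0"
    using triple_product_eq_0_iff_plucker assms(2-4) .
  also have "\<dots> \<longleftrightarrow>
    (\<forall>x\<in>{axis_dir z1, axis_dir z2, axis_dir z3}. \<forall>y\<in>{axis_dir z1, axis_dir z2, axis_dir z3}.
       \<exists>r. x = r *\<^sub>R y) \<or>
    (\<exists>p w. w \<noteq> 0 \<and> meets_orthogonally p w (axis_dir z1) (axis_moment z1) \<and>
       meets_orthogonally p w (axis_dir z2) (axis_moment z2) \<and>
       meets_orthogonally p w (axis_dir z3) (axis_moment z3))"
    using assms(2-4) by (intro plucker_triple_product_eq_0_iff axis_dir_unit axis_dir_moment_orthogonal)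
  finally show ?thesis
    unfolding exists_lineE_meeting_axes_orthogonally_iff[OF assms(1)]
    by (simp add: vparallel_iff flip: axis_dir_def)
qed

end

theorem proposition14:
  fixes sp :: "dmod \<Rightarrow> dmod \<Rightarrow> dual" and OR :: "(3 \<Rightarrow> dmod) set"
    and z1 z2 z3 :: dmod
  assumes "scalar_product sp" and "orientation OR"
    and "z1 \<notin> epsM" and "z2 \<notin> epsM" and "z3 \<notin> epsM"
  shows "sp (cross sp OR z1 z2) z3 = 0 \<longleftrightarrow>
     ((\<forall>z\<in>{z1, z2, z3}. \<forall>z'\<in>{z1, z2, z3}. vparallel (unitpart sp z) (unitpart sp z'))
      \<or> (\<exists>A w. A \<in> Eset sp \<and> w \<notin> epsM \<and>
           (\<forall>z\<in>{z1, z2, z3}. axis sp z \<inter> lineE sp OR A w \<noteq> {} \<and>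
                              dRe (sp (unitpart sp z) w) = 0)))"
proof -
  have "orthonormal_coordinates sp (SOME m. pos_orthonormal sp OR m)"
    using assms(1,2) by (intro dual_scalar_product.orthonormal_coordinates_chosen dual_scalar_product.intro)
  then show ?thesis
    unfolding cross_eq_cross_in using orthonormal_coordinates.triple_product_eq_0_iff_axes assms(2-5) by blast
qed

end
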